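(* Let $M$ be a complete pointed metric space and $Y$ a real Banach space. If $Y_1$ is an absolute summand of $Y$ and $\mathrm{A}(M,Y)$ is dense in $\mathrm{Lip}_0(M,Y)$, then $\mathrm{A}(M,Y_1)$ is dense in $\mathrm{Lip}_0(M,Y_1)$.
   Context: Throughout, metric spaces are complete and pointed, with base point $0$. $\mathrm{Lip}_0(M,Y)$ is the Banach space of Lipschitz maps $f:M\to Y$ with $f(0)=0$, normed by $\|f\|=\sup_{p\neq q}\|f(p)-f(q)\|/d(p,q)$. A map $f$ attains its norm toward $y\in Y$ if there is a sequence $(p_n,q_n)$ in $M\times M$ with $p_n\neq q_n$ such that $[f(p_n)-f(q_n)]/d(p_n,q_n)\to y$ and $\|y\|=\|f\|$; $\mathrm{A}(M,Y)$ is the set of $f$ attaining their norm toward some vector. An absolute norm $|\cdot|_a$ on $\mathbb{R}^2$ is a norm with $|(1,0)|_a=|(0,1)|_a=1$ and $|(p,q)|_a=|(|p|,|q|)|_a$ for all $p,q$. The absolute sum $Y_1\oplus_a Y_2$ of Banach spaces $Y_1,Y_2$ is $Y_1\times Y_2$ with the norm $\|(y_1,y_2)\|_a=|(\|y_1\|,\|y_2\|)|_a$. A Banach space $Y_1$ is an absolute summand of $Y$ if $Y=Y_1\oplus_a Y_2$ (isometrically) for some Banach space $Y_2$ and some absolute norm $|\cdot|_a$. *)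

theory Defs
  imports "HOL-Analysis.Analysis"
begin

definition Lip0 :: "'m::metric_space \<Rightarrow> ('m \<Rightarrow> 'y::real_normed_vector) set" where
  "Lip0 p0 = {f. f p0 = 0 \<and> (\<exists>C. C-lipschitz_on UNIV f)}"

text \<open>Lipschitz norm (0 is included so that a one-point space gives norm 0).\<close>
definition lipnorm :: "('m::metric_space \<Rightarrow> 'y::real_normed_vector) \<Rightarrow> real" where
  "lipnorm f = Sup ({0} \<union> {norm (f p - f q) / dist p q | p q. p \<noteq> q})"

definition attains_norm_toward :: "('m::metric_space \<Rightarrow> 'y::real_normed_vector) \<Rightarrow> 'y \<Rightarrow> bool" where
  "attains_norm_toward f y \<longleftrightarrow>
     (\<exists>p q :: nat \<Rightarrow> 'm. (\<forall>n. p n \<noteq> q n) \<and>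
        ((\<lambda>n. (1 / dist (p n) (q n)) *\<^sub>R (f (p n) - f (q n))) \<longlongrightarrow> y) sequentially \<and>
        norm y = lipnorm f)"

definition NA :: "'m::metric_space \<Rightarrow> ('m \<Rightarrow> 'y::real_normed_vector) set" where
  "NA p0 = {f \<in> Lip0 p0. \<exists>y. attains_norm_toward f y}"

definition dense_in_Lip0 :: "'m::metric_space \<Rightarrow> ('m \<Rightarrow> 'y::real_normed_vector) set \<Rightarrow> bool" where
  "dense_in_Lip0 p0 S \<longleftrightarrow> (\<forall>f \<in> Lip0 p0. \<forall>e>0. \<exists>g \<in> S. lipnorm (f - g) < e)"

definition absolute_norm :: "(real \<times> real \<Rightarrow> real) \<Rightarrow> bool" where
  "absolute_norm N \<longleftrightarrow>
     (\<forall>x. N x = 0 \<longleftrightarrow> x = 0) \<and>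
     (\<forall>x y. N (x + y) \<le> N x + N y) \<and>
     (\<forall>c x. N (c *\<^sub>R x) = \<bar>c\<bar> * N x) \<and>
     N (1, 0) = 1 \<and> N (0, 1) = 1 \<and>
     (\<forall>a b. N (a, b) = N (\<bar>a\<bar>, \<bar>b\<bar>))"

text \<open>Y1 is an absolute summand of Y, witnessed by a complement Y2, an absolute norm N
  and a linear isometric isomorphism T : Y \<rightarrow> Y1 \<oplus>_N Y2.\<close>
definition absolute_sum_decomp ::
  "('y::real_normed_vector \<Rightarrow> 'y1::real_normed_vector \<times> 'y2::real_normed_vector) \<Rightarrow> (real \<times> real \<Rightarrow> real) \<Rightarrow> bool" where
  "absolute_sum_decomp T N \<longleftrightarrow> absolute_norm N \<and> linear T \<and> bij T \<and>
     (\<forall>y. norm y = N (norm (fst (T y)), norm (snd (T y))))"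

end

theory Submission
  imports Defs
begin

text \<open>
  Embed \<open>f\<close> into \<open>Y\<close> as \<open>F = T\<inverse> \<circ> (f, 0)\<close> and approximate \<open>F\<close> by a map \<open>G\<close> that
  attains its norm along pairs whose slopes tend to \<open>y\<close>. Write \<open>T \<circ> G = (g\<^sub>1, g\<^sub>2)\<close> and
  \<open>T y = (y\<^sub>1, y\<^sub>2)\<close>: then \<open>g\<^sub>1\<close> is close to \<open>f\<close>, while \<open>g\<^sub>2\<close> and hence \<open>\<parallel>y\<^sub>2\<parallel>\<close> are small.
  Choose weights \<open>d\<^sub>1, d\<^sub>2 \<in> [0, 1]\<close> of a linear functional supporting the absolute norm at
  \<open>(\<parallel>y\<^sub>1\<parallel>, \<parallel>y\<^sub>2\<parallel>)\<close>, and a 1-Lipschitz real function \<open>\<phi>\<close> whose slopes along \<open>g\<^sub>2\<close> tend to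
  \<open>\<parallel>y\<^sub>2\<parallel>\<close>. Then \<open>h = d\<^sub>1 g\<^sub>1 + d\<^sub>2 (\<phi> \<circ> g\<^sub>2) y\<^sub>1/\<parallel>y\<^sub>1\<parallel>\<close> has norm at most \<open>\<parallel>G\<parallel>\<close> and attains
  it along the same pairs. Since \<open>\<parallel>y\<^sub>1\<parallel> \<le> d\<^sub>1 \<parallel>y\<^sub>1\<parallel> + \<parallel>y\<^sub>2\<parallel>\<close>, the weight \<open>1 - d\<^sub>1\<close> lost on
  \<open>g\<^sub>1\<close> costs at most \<open>2\<parallel>y\<^sub>2\<parallel>\<close>, so \<open>h\<close> stays within \<open>4\<parallel>F - G\<parallel>\<close> of \<open>f\<close>.
\<close>

definition slope :: "('m::metric_space \<Rightarrow> 'y::real_normed_vector) \<Rightarrow> 'm \<Rightarrow> 'm \<Rightarrow> 'y" where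
  "slope f p q = (1 / dist p q) *\<^sub>R (f p - f q)"

lemma attains_norm_toward_iff_slope:
  "attains_norm_toward f y \<longleftrightarrow>
     (\<exists>p q. (\<forall>n. p n \<noteq> q n) \<and> (\<lambda>n. slope f (p n) (q n)) \<longlonglongrightarrow> y \<and> norm y = lipnorm f)"
  by (simp add: attains_norm_toward_def slope_def)

lemma slope_linear:
  assumes "linear P"
  shows "slope (\<lambda>x. P (g x)) p q = P (slope g p q)"
  using assms by (simp add: slope_def linear_diff linear_scale)

lemma norm_slope_le:
  assumes "\<And>p q. norm (f p - f q) \<le> C * dist p q" and "p \<noteq> q"
  shows "norm (slope f p q) \<le> C"
  using assms by (simp add: slope_def divide_le_eq mult.commute)

lemma tendsto_slope_norm_le:
  assumes "\<And>p q. norm (f p - f q) \<le> C * dist p q" and "\<And>n. p n \<noteq> q n"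
    and "(\<lambda>n. slope f (p n) (q n)) \<longlonglongrightarrow> y"
  shows "norm y \<le> C"
  using LIMSEQ_le_const2[OF tendsto_norm[OF assms(3)]] norm_slope_le[OF assms(1,2)] by blast

lemma Lip0_lipnorm_bdd_above:
  assumes "f \<in> Lip0 p0"
  shows "bdd_above ({0} \<union> {norm (f p - f q) / dist p q | p q. p \<noteq> q})"
proof -
  obtain C where "C-lipschitz_on UNIV f"
    using assms by (auto simp: Lip0_def)
  then show ?thesis
    using lipschitz_on_nonneg lipschitz_onD[of C UNIV f]
    by (intro bdd_aboveI[of _ C]) (auto simp: dist_norm divide_le_eq)
qed

lemma lipnorm_nonneg: "f \<in> Lip0 p0 \<Longrightarrow> 0 \<le> lipnorm f"
  unfolding lipnorm_def by (rule cSup_upper[OF _ Lip0_lipnorm_bdd_above]) auto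

lemma norm_diff_le_lipnorm:
  assumes "f \<in> Lip0 p0"
  shows "norm (f p - f q) \<le> lipnorm f * dist p q"
proof (cases "p = q")
  case False
  then have "norm (f p - f q) / dist p q \<le> lipnorm f"
    unfolding lipnorm_def by (intro cSup_upper[OF _ Lip0_lipnorm_bdd_above[OF assms]]) blast
  then show ?thesis
    using False by (simp add: divide_le_eq)
qed simp

lemma lipnorm_le:
  assumes "0 \<le> C" and "\<And>p q. norm (f p - f q) \<le> C * dist p q"
  shows "lipnorm f \<le> C"
  unfolding lipnorm_def using assms by (intro cSup_least) (auto simp: divide_le_eq)

lemma Lip0_diff:
  assumes "f \<in> Lip0 p0" and "g \<in> Lip0 p0"
  shows "f - g \<in> Lip0 p0"
  using assms lipschitz_on_diff[of _ UNIV f _ g] by (auto simp: Lip0_def fun_diff_def)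

lemma Lip0_compose_contraction:
  assumes "f \<in> Lip0 p0" and "linear P" and contr: "\<And>v. norm (P v) \<le> norm v"
  shows "(\<lambda>x. P (f x)) \<in> Lip0 p0" and "lipnorm (\<lambda>x. P (f x)) \<le> lipnorm f"
proof -
  have bound: "norm (P (f x) - P (f x')) \<le> lipnorm f * dist x x'" for x x'
    using contr[of "f x - f x'"] norm_diff_le_lipnorm[OF assms(1)]
    by (metis linear_diff[OF \<open>linear P\<close>] order_trans)
  then have "(lipnorm f)-lipschitz_on UNIV (\<lambda>x. P (f x))"
    using lipnorm_nonneg[OF assms(1)] by (intro lipschitz_onI) (auto simp: dist_norm)
  moreover have "P (f p0) = 0"
    using assms(1) linear_0[OF \<open>linear P\<close>] by (simp add: Lip0_def)
  ultimately show "(\<lambda>x. P (f x)) \<in> Lip0 p0"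
    by (auto simp: Lip0_def)
  show "lipnorm (\<lambda>x. P (f x)) \<le> lipnorm f"
    using lipnorm_nonneg[OF assms(1)] bound by (rule lipnorm_le)
qed

lemma lipnorm_diff_triangle:
  assumes "f \<in> Lip0 p0" "g \<in> Lip0 p0" "h \<in> Lip0 p0"
  shows "lipnorm (f - h) \<le> lipnorm (f - g) + lipnorm (g - h)"
proof (rule lipnorm_le)
  show "0 \<le> lipnorm (f - g) + lipnorm (g - h)"
    using assms by (intro add_nonneg_nonneg lipnorm_nonneg Lip0_diff)
  fix x x'
  have "norm ((f - h) x - (f - h) x') \<le> norm ((f - g) x - (f - g) x') + norm ((g - h) x - (g - h) x')"
    using norm_triangle_ineq[of "(f - g) x - (f - g) x'" "(g - h) x - (g - h) x'"]
    by (simp add: algebra_simps)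
  also have "\<dots> \<le> (lipnorm (f - g) + lipnorm (g - h)) * dist x x'"
    unfolding distrib_right
    by (intro add_mono norm_diff_le_lipnorm[OF Lip0_diff[OF assms(1,2)]]
        norm_diff_le_lipnorm[OF Lip0_diff[OF assms(2,3)]])
  finally show "norm ((f - h) x - (f - h) x') \<le> (lipnorm (f - g) + lipnorm (g - h)) * dist x x'" .
qed

lemma NA_I:
  assumes "f p0 = 0" and bound: "\<And>p q. norm (f p - f q) \<le> K * dist p q"
    and pq: "\<And>n. p n \<noteq> q n" and lim: "(\<lambda>n. slope f (p n) (q n)) \<longlonglongrightarrow> y"
    and "norm y = K"
  shows "f \<in> NA p0"
proof -
  have "0 \<le> K"
    using \<open>norm y = K\<close> by auto
  then have "K-lipschitz_on UNIV f"
    using bound by (intro lipschitz_onI) (auto simp: dist_norm)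
  then have "f \<in> Lip0 p0"
    using \<open>f p0 = 0\<close> by (auto simp: Lip0_def)
  moreover have "lipnorm f = K"
  proof (rule antisym)
    show "lipnorm f \<le> K"
      using \<open>0 \<le> K\<close> bound by (rule lipnorm_le)
    show "K \<le> lipnorm f"
      using tendsto_slope_norm_le[OF norm_diff_le_lipnorm[OF \<open>f \<in> Lip0 p0\<close>] pq lim]
        \<open>norm y = K\<close> by simp
  qed
  ultimately show ?thesis
    using pq lim \<open>norm y = K\<close> by (auto simp: NA_def attains_norm_toward_iff_slope)
qed

lemma absolute_norm_axis:
  assumes "absolute_norm N"
  shows "N (x, 0) = \<bar>x\<bar>" and "N (0, y) = \<bar>y\<bar>"
  using assms unfolding absolute_norm_def
  by (metis mult.right_neutral scaleR_Pair scaleR_zero_right real_scaleR_def)+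

lemma absolute_norm_ge_abs:
  assumes "absolute_norm N"
  shows "\<bar>x\<bar> \<le> N (x, y)" and "\<bar>y\<bar> \<le> N (x, y)"
proof -
  have tri: "N (u + v) \<le> N u + N v" and sym: "N (a, b) = N (\<bar>a\<bar>, \<bar>b\<bar>)" for u v a b
    using assms unfolding absolute_norm_def by blast+
  have "N (x + x, 0) \<le> N (x, y) + N (x, - y)" and "N (0, y + y) \<le> N (x, y) + N (- x, y)"
    using tri[of "(x, y)" "(x, - y)"] tri[of "(x, y)" "(- x, y)"] by simp_all
  moreover have "N (x, - y) = N (x, y)" and "N (- x, y) = N (x, y)"
    using sym[of x y] sym[of x "- y"] sym[of "- x" y] by (simp_all only: abs_minus_cancel)
  ultimately show "\<bar>x\<bar> \<le> N (x, y)" and "\<bar>y\<bar> \<le> N (x, y)"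
    using absolute_norm_axis(1)[OF assms, of "x + x"] absolute_norm_axis(2)[OF assms, of "y + y"]
    by simp_all
qed

lemma absolute_norm_le_sum:
  assumes "absolute_norm N"
  shows "N (x, y) \<le> \<bar>x\<bar> + \<bar>y\<bar>"
proof -
  have "N ((x, 0) + (0, y)) \<le> N (x, 0) + N (0, y)"
    using assms unfolding absolute_norm_def by blast
  then show ?thesis
    using absolute_norm_axis[OF assms] by simp
qed

lemma convex_strict_sublevel:
  fixes N :: "'a::real_vector \<Rightarrow> real"
  assumes tri: "\<And>x y. N (x + y) \<le> N x + N y" and hom: "\<And>c x. N (c *\<^sub>R x) = \<bar>c\<bar> * N x"
  shows "convex {x. N x < r}"
proof (rule convexI)
  fix x y :: 'a and u v :: real
  assume "x \<in> {x. N x < r}" "y \<in> {x. N x < r}" "0 \<le> u" "0 \<le> v" "u + v = 1"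
  then have "N (u *\<^sub>R x + v *\<^sub>R y) \<le> u * N x + v * N y" and "u * N x + v * N y < r"
    using tri[of "u *\<^sub>R x" "v *\<^sub>R y"] hom[of u x] hom[of v y] convex_bound_lt[of "N x" r "N y"]
    by auto
  then show "u *\<^sub>R x + v *\<^sub>R y \<in> {x. N x < r}"
    by simp
qed

lemma inner_le_of_strict_sublevel:
  fixes N :: "'a::real_inner \<Rightarrow> real"
  assumes zero: "\<And>x. N x = 0 \<longleftrightarrow> x = 0" and nonneg: "\<And>x. 0 \<le> N x"
    and hom: "\<And>c x. N (c *\<^sub>R x) = \<bar>c\<bar> * N x"
    and "0 < r" and sublevel: "\<And>x. N x < r \<Longrightarrow> a \<bullet> x \<le> b"
  shows "(a \<bullet> x) * r \<le> b * N x"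
proof (cases "x = 0")
  case True
  then show ?thesis
    using sublevel[of 0] zero[of 0] \<open>0 < r\<close> by simp
next
  case False
  then have "0 < N x"
    using zero nonneg by (simp add: order_less_le)
  \<comment> \<open>rescale \<open>x\<close> into the open sublevel set and let the factor \<open>t\<close> tend to 1\<close>
  have "t * ((a \<bullet> x) * r / N x) \<le> b" if "0 < t" "t < 1" for t
  proof -
    have "N ((t * r / N x) *\<^sub>R x) = t * r"
      using hom[of "t * r / N x" x] that \<open>0 < N x\<close> \<open>0 < r\<close> by simp
    then have "a \<bullet> ((t * r / N x) *\<^sub>R x) \<le> b"
      using that \<open>0 < r\<close> by (intro sublevel) simp
    then show ?thesis
      by (simp add: ac_simps)
  qed
  then have "(a \<bullet> x) * r / N x \<le> b"
    by (rule field_le_mult_one_interval)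
  then show ?thesis
    using \<open>0 < N x\<close> by (simp add: divide_le_eq mult.commute)
qed

lemma norming_functional_exists:
  fixes N :: "'a::euclidean_space \<Rightarrow> real"
  assumes zero: "\<And>x. N x = 0 \<longleftrightarrow> x = 0"
    and tri: "\<And>x y. N (x + y) \<le> N x + N y"
    and hom: "\<And>c x. N (c *\<^sub>R x) = \<bar>c\<bar> * N x"
  obtains c where "\<And>x. c \<bullet> x \<le> N x" and "c \<bullet> z = N z"
proof -
  have nonneg: "0 \<le> N x" for x
    using tri[of x "- x"] hom[of "- 1" x] zero[of 0] by simp
  show ?thesis
  proof (cases "z = 0")
    case True
    then show ?thesis
      using that[of 0] zero nonneg by simp
  next
    case False
    define r where "r = N z"
    have "0 < r"
      using False zero nonneg unfolding r_def by (simp add: order_less_le)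
    have "z \<notin> {x. N x < r}"
      unfolding r_def by simp
    then obtain a b where "a \<noteq> 0" and sublevel: "\<And>x. N x < r \<Longrightarrow> a \<bullet> x \<le> b" and "b \<le> a \<bullet> z"
      using separating_hyperplane_sets[of "{x. N x < r}" "{z}"] convex_strict_sublevel[OF tri hom]
        zero[of 0] \<open>0 < r\<close> by force
    note scaled = inner_le_of_strict_sublevel[OF zero nonneg hom \<open>0 < r\<close> sublevel]
    have "0 < b"
    proof (rule ccontr)
      assume "\<not> 0 < b"
      then have "(a \<bullet> a) * r \<le> 0"
        using scaled[of a] nonneg[of a] by (meson mult_nonpos_nonneg not_less order_trans)
      then have "a \<bullet> a \<le> 0"
        using \<open>0 < r\<close> by (simp add: mult_le_0_iff)
      then show False
        using \<open>a \<noteq> 0\<close> by (metis inner_gt_zero_iff not_le)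
    qed
    show ?thesis
    proof (rule that[of "(r / b) *\<^sub>R a"])
      show "(r / b) *\<^sub>R a \<bullet> x \<le> N x" for x
        using scaled[of x] \<open>0 < b\<close> by (simp add: field_simps)
      have "(a \<bullet> z) * r \<le> b * r"
        using scaled[of z] unfolding r_def .
      then show "(r / b) *\<^sub>R a \<bullet> z = N z"
        using \<open>b \<le> a \<bullet> z\<close> \<open>0 < b\<close> \<open>0 < r\<close> unfolding r_def by (simp add: field_simps)
    qed
  qed
qed

lemma absolute_norm_support_weights:
  assumes N: "absolute_norm N" and "0 \<le> a" "0 \<le> b"
  obtains d1 d2 where "0 \<le> d1" "d1 \<le> 1" "0 \<le> d2" "d2 \<le> 1"
    and "\<And>x y. 0 \<le> x \<Longrightarrow> 0 \<le> y \<Longrightarrow> d1 * x + d2 * y \<le> N (x, y)"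
    and "d1 * a + d2 * b = N (a, b)"
proof -
  have sym: "N (x, y) = N (\<bar>x\<bar>, \<bar>y\<bar>)" for x y
    using N unfolding absolute_norm_def by blast
  obtain c where c: "\<And>v. c \<bullet> v \<le> N v" and "c \<bullet> (a, b) = N (a, b)"
    using norming_functional_exists[of N "(a, b)"] N unfolding absolute_norm_def by blast
  obtain c1 c2 where "c = (c1, c2)"
    by (cases c)
  then have c12: "c1 * x + c2 * y \<le> N (x, y)" for x y
    using c[of "(x, y)"] by simp
  have weights: "\<bar>c1\<bar> * x + \<bar>c2\<bar> * y \<le> N (x, y)" if "0 \<le> x" "0 \<le> y" for x y
  proof -
    define s1 s2 :: real where "s1 = (if c1 < 0 then -1 else 1)" and "s2 = (if c2 < 0 then -1 else 1)"
    have "\<bar>c1\<bar> * x + \<bar>c2\<bar> * y = c1 * (s1 * x) + c2 * (s2 * y)"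
      unfolding s1_def s2_def by auto
    also have "\<dots> \<le> N (s1 * x, s2 * y)"
      by (rule c12)
    also have "\<dots> = N (x, y)"
      using sym[of "s1 * x" "s2 * y"] sym[of x y] that unfolding s1_def s2_def by simp
    finally show ?thesis .
  qed
  show ?thesis
  proof (rule that[of "\<bar>c1\<bar>" "\<bar>c2\<bar>"])
    show "\<bar>c1\<bar> \<le> 1" "\<bar>c2\<bar> \<le> 1"
      using weights[of 1 0] weights[of 0 1] absolute_norm_axis[OF N] by simp_all
    have "c1 * a + c2 * b \<le> \<bar>c1\<bar> * a + \<bar>c2\<bar> * b"
      using \<open>0 \<le> a\<close> \<open>0 \<le> b\<close> by (intro add_mono mult_right_mono) auto
    then show "\<bar>c1\<bar> * a + \<bar>c2\<bar> * b = N (a, b)"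
      using weights[OF \<open>0 \<le> a\<close> \<open>0 \<le> b\<close>] \<open>c \<bullet> (a, b) = N (a, b)\<close> \<open>c = (c1, c2)\<close> by simp
  qed (use weights in auto)
qed

lemma absolute_norm_support_defect:
  assumes N: "absolute_norm N" and "0 \<le> a" "0 \<le> b" "0 \<le> d1" "d1 \<le> 1" "0 \<le> d2" "d2 \<le> 1"
    and support: "d1 * a + d2 * b = N (a, b)"
  shows "(1 - d1) * N (a, b) \<le> 2 * b"
proof -
  have "a \<le> d1 * a + d2 * b"
    using absolute_norm_ge_abs(1)[OF N, of a b] support \<open>0 \<le> a\<close> by simp
  moreover have "d2 * b \<le> b"
    using assms by (simp add: mult_left_le_one_le)
  ultimately have "(1 - d1) * a \<le> b"
    by (simp add: algebra_simps)
  moreover have "(1 - d1) * b \<le> b"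
    using assms mult_left_le_one_le[of b "1 - d1"] by simp
  moreover have "(1 - d1) * N (a, b) \<le> (1 - d1) * (a + b)"
    using absolute_norm_le_sum[OF N, of a b] assms by (intro mult_left_mono) simp_all
  ultimately show ?thesis
    by (simp add: distrib_left)
qed

text \<open>The Busemann function of the ray \<open>s \<mapsto> s *\<^sub>R w\<close> stands in for a norming functional
  of \<open>w\<close>, avoiding Hahn--Banach.\<close>

definition busemann :: "'a::real_normed_vector \<Rightarrow> 'a \<Rightarrow> real" where
  "busemann w v = (INF s. s * norm w + norm (v - s *\<^sub>R w))"

lemma busemann_bdd_below: "bdd_below (range (\<lambda>s. s * norm w + norm (v - s *\<^sub>R w)))"
proof (rule bdd_belowI2)
  fix s
  have "norm (s *\<^sub>R w) \<le> norm v + norm (v - s *\<^sub>R w)"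
    using norm_triangle_ineq4[of v "v - s *\<^sub>R w"] by simp
  moreover have "- (s * norm w) \<le> \<bar>s\<bar> * norm w"
    by (metis abs_ge_minus_self mult_minus_left mult_right_mono norm_ge_zero)
  ultimately show "- norm v \<le> s * norm w + norm (v - s *\<^sub>R w)"
    by simp
qed

lemma busemann_le: "busemann w v \<le> s * norm w + norm (v - s *\<^sub>R w)"
  unfolding busemann_def by (rule cINF_lower[OF busemann_bdd_below]) simp

lemma busemann_le_busemann:
  "busemann w v \<le> busemann w u + d * norm w + norm (v - u - d *\<^sub>R w)"
proof -
  have "busemann w v - d * norm w - norm (v - u - d *\<^sub>R w) \<le> busemann w u"
    unfolding busemann_def[of w u]
  proof (rule cINF_greatest)
    fix s
    have "busemann w v \<le> (s + d) * norm w + norm (v - (s + d) *\<^sub>R w)"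
      by (rule busemann_le)
    also have "norm (v - (s + d) *\<^sub>R w) \<le> norm (u - s *\<^sub>R w) + norm (v - u - d *\<^sub>R w)"
      using norm_triangle_ineq[of "u - s *\<^sub>R w" "v - u - d *\<^sub>R w"] by (simp add: algebra_simps)
    finally show "busemann w v - d * norm w - norm (v - u - d *\<^sub>R w) \<le> s * norm w + norm (u - s *\<^sub>R w)"
      by (simp add: algebra_simps)
  qed simp
  then show ?thesis
    by simp
qed

lemma busemann_approx:
  "\<bar>busemann w v - busemann w u - d * norm w\<bar> \<le> norm (v - u - d *\<^sub>R w)"
proof -
  have reflect: "u - v - (- d) *\<^sub>R w = - (v - u - d *\<^sub>R w)"
    by (simp add: algebra_simps)
  show ?thesis
    using busemann_le_busemann[of w v u d] busemann_le_busemann[of w u v "- d"]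
    unfolding reflect norm_minus_cancel by linarith
qed

lemma busemann_lipschitz: "\<bar>busemann w v - busemann w u\<bar> \<le> norm (v - u)"
  using busemann_approx[of w v u 0] by simp

lemma tendsto_slope_busemann:
  assumes pq: "\<And>n. p n \<noteq> q n" and lim: "(\<lambda>n. slope g (p n) (q n)) \<longlonglongrightarrow> w"
  shows "(\<lambda>n. slope (\<lambda>x. busemann w (g x)) (p n) (q n)) \<longlonglongrightarrow> norm w"
proof -
  have "norm (slope (\<lambda>x. busemann w (g x)) x x' - norm w) \<le> norm (slope g x x' - w)"
    if "x \<noteq> x'" for x x'
  proof -
    define d where "d = dist x x'"
    have "0 < d"
      using that by (simp add: d_def)
    have "norm (slope (\<lambda>x. busemann w (g x)) x x' - norm w)
        = \<bar>busemann w (g x) - busemann w (g x') - d * norm w\<bar> / d"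
      using \<open>0 < d\<close> unfolding slope_def d_def[symmetric] by (simp add: field_simps)
    also have "\<dots> \<le> norm (g x - g x' - d *\<^sub>R w) / d"
      using \<open>0 < d\<close> by (intro divide_right_mono busemann_approx) simp
    also have "g x - g x' - d *\<^sub>R w = d *\<^sub>R (slope g x x' - w)"
      using \<open>0 < d\<close> by (simp add: slope_def d_def algebra_simps)
    finally show ?thesis
      using \<open>0 < d\<close> by simp
  qed
  then have "(\<lambda>n. slope (\<lambda>x. busemann w (g x)) (p n) (q n) - norm w) \<longlonglongrightarrow> 0"
    using pq by (intro Lim_null_comparison[OF always_eventually tendsto_norm_zero[OF LIM_zero[OF lim]]]) auto
  then show ?thesis
    by (simp add: LIM_zero_iff)
qed

lemma combination_in_NA:
  fixes g1 :: "'m::metric_space \<Rightarrow> 'y1::real_normed_vector" and g2 :: "'m \<Rightarrow> 'y2::real_normed_vector"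
    and \<phi> :: "'m \<Rightarrow> real"
  assumes weights: "0 \<le> d1" "0 \<le> d2" "\<And>x y. 0 \<le> x \<Longrightarrow> 0 \<le> y \<Longrightarrow> d1 * x + d2 * y \<le> N (x, y)"
    and K: "\<And>x x'. N (norm (g1 x - g1 x'), norm (g2 x - g2 x')) \<le> K * dist x x'"
    and \<phi>: "\<And>x x'. \<bar>\<phi> x - \<phi> x'\<bar> \<le> norm (g2 x - g2 x')"
    and "g1 p0 = 0" and "\<phi> p0 = 0"
    and pq: "\<And>n. p n \<noteq> q n"
    and lim1: "(\<lambda>n. slope g1 (p n) (q n)) \<longlonglongrightarrow> a *\<^sub>R u" and "norm u = 1"
    and lim\<phi>: "(\<lambda>n. slope \<phi> (p n) (q n)) \<longlonglongrightarrow> b"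
    and "0 \<le> a" "0 \<le> b" and attained: "d1 * a + d2 * b = K"
  shows "(\<lambda>x. d1 *\<^sub>R g1 x + (d2 * \<phi> x) *\<^sub>R u) \<in> NA p0"
    (is "?h \<in> NA p0")
proof (rule NA_I)
  show "?h p0 = 0"
    using \<open>g1 p0 = 0\<close> \<open>\<phi> p0 = 0\<close> by simp
  show "norm (?h x - ?h x') \<le> K * dist x x'" for x x'
  proof -
    have "?h x - ?h x' = d1 *\<^sub>R (g1 x - g1 x') + (d2 * (\<phi> x - \<phi> x')) *\<^sub>R u"
      by (simp add: algebra_simps)
    then have "norm (?h x - ?h x') \<le> norm (d1 *\<^sub>R (g1 x - g1 x')) + norm ((d2 * (\<phi> x - \<phi> x')) *\<^sub>R u)"
      by (metis norm_triangle_ineq)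
    also have "\<dots> = d1 * norm (g1 x - g1 x') + d2 * \<bar>\<phi> x - \<phi> x'\<bar>"
      using weights \<open>norm u = 1\<close> by (simp add: abs_mult)
    also have "\<dots> \<le> d1 * norm (g1 x - g1 x') + d2 * norm (g2 x - g2 x')"
      by (intro add_left_mono mult_left_mono \<phi> weights(2))
    also have "\<dots> \<le> K * dist x x'"
      using weights(3)[of "norm (g1 x - g1 x')" "norm (g2 x - g2 x')"] K[of x x'] by simp
    finally show ?thesis .
  qed
  have "slope ?h x x' = d1 *\<^sub>R slope g1 x x' + (d2 * slope \<phi> x x') *\<^sub>R u" for x x'
    by (simp add: slope_def algebra_simps diff_divide_distrib)
  moreover have "(\<lambda>n. d1 *\<^sub>R slope g1 (p n) (q n) + (d2 * slope \<phi> (p n) (q n)) *\<^sub>R u)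
      \<longlonglongrightarrow> d1 *\<^sub>R (a *\<^sub>R u) + (d2 * b) *\<^sub>R u"
    by (intro tendsto_intros lim1 lim\<phi>)
  moreover have "d1 *\<^sub>R (a *\<^sub>R u) + (d2 * b) *\<^sub>R u = K *\<^sub>R u"
    using attained by (simp add: scaleR_add_left[symmetric])
  ultimately show "(\<lambda>n. slope ?h (p n) (q n)) \<longlonglongrightarrow> K *\<^sub>R u"
    by simp
  have "0 \<le> K"
    unfolding attained[symmetric] using weights \<open>0 \<le> a\<close> \<open>0 \<le> b\<close> by simp
  then show "norm (K *\<^sub>R u) = K"
    using \<open>norm u = 1\<close> by simp
qed (fact pq)

lemma combination_defect_le:
  fixes g :: "'m::metric_space \<Rightarrow> 'y::real_normed_vector" and \<phi> :: "'m \<Rightarrow> real"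
  assumes "0 \<le> d1" "d1 \<le> 1" "0 \<le> d2" "norm u = 1"
    and g: "\<And>x x'. norm (g x - g x') \<le> K * dist x x'"
    and \<phi>: "\<And>x x'. \<bar>\<phi> x - \<phi> x'\<bar> \<le> D * dist x x'"
  shows "norm ((g x - (d1 *\<^sub>R g x + (d2 * \<phi> x) *\<^sub>R u)) - (g x' - (d1 *\<^sub>R g x' + (d2 * \<phi> x') *\<^sub>R u)))
    \<le> ((1 - d1) * K + d2 * D) * dist x x'"
proof -
  have "(g x - (d1 *\<^sub>R g x + (d2 * \<phi> x) *\<^sub>R u)) - (g x' - (d1 *\<^sub>R g x' + (d2 * \<phi> x') *\<^sub>R u))
      = (1 - d1) *\<^sub>R (g x - g x') - (d2 * (\<phi> x - \<phi> x')) *\<^sub>R u"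
    by (simp add: algebra_simps)
  also have "norm \<dots> \<le> norm ((1 - d1) *\<^sub>R (g x - g x')) + norm ((d2 * (\<phi> x - \<phi> x')) *\<^sub>R u)"
    by (rule norm_triangle_ineq4)
  also have "\<dots> = (1 - d1) * norm (g x - g x') + d2 * \<bar>\<phi> x - \<phi> x'\<bar>"
    using assms(1-4) by (simp add: abs_mult)
  also have "\<dots> \<le> (1 - d1) * (K * dist x x') + d2 * (D * dist x x')"
    using assms(1-3) by (intro add_mono mult_left_mono g \<phi>) simp_all
  finally show ?thesis
    by (simp add: algebra_simps)
qed

lemma NA_near_norm_attaining_pair:
  fixes g1 :: "'m::metric_space \<Rightarrow> 'y1::real_normed_vector" and g2 :: "'m \<Rightarrow> 'y2::real_normed_vector"
  assumes N: "absolute_norm N"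
    and "g1 p0 = 0"
    and K: "\<And>x x'. N (norm (g1 x - g1 x'), norm (g2 x - g2 x')) \<le> K * dist x x'"
    and D: "\<And>x x'. norm (g2 x - g2 x') \<le> D * dist x x'"
    and pq: "\<And>n. p n \<noteq> q n"
    and lim1: "(\<lambda>n. slope g1 (p n) (q n)) \<longlonglongrightarrow> y1"
    and lim2: "(\<lambda>n. slope g2 (p n) (q n)) \<longlonglongrightarrow> y2"
    and attained: "N (norm y1, norm y2) = K"
  obtains h where "h \<in> NA p0" and "\<And>x x'. norm ((g1 x - h x) - (g1 x' - h x')) \<le> 3 * D * dist x x'"
proof -
  define b where "b = norm y2"
  have "0 \<le> b" and "b \<le> D"
    using tendsto_slope_norm_le[OF D pq lim2] by (simp_all add: b_def)
  have g1: "norm (g1 x - g1 x') \<le> K * dist x x'" for x x'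
    using absolute_norm_ge_abs(1)[OF N] K order_trans by fastforce
  show ?thesis
  proof (cases "y1 = 0")
    case True
    have "(\<lambda>_. 0) \<in> NA p0"
      by (rule NA_I[where K = 0 and y = 0, OF _ _ pq]) (simp_all add: slope_def)
    moreover have "K \<le> 3 * D"
      using attained True absolute_norm_axis(2)[OF N] \<open>0 \<le> b\<close> \<open>b \<le> D\<close> by (simp add: b_def)
    then have "norm ((g1 x - 0) - (g1 x' - 0)) \<le> 3 * D * dist x x'" for x x'
      using g1[of x x'] mult_right_mono[OF _ zero_le_dist[of x x']] by fastforce
    ultimately show ?thesis
      by (rule that)
  next
    case False
    define a where "a = norm y1"
    have "0 < a"
      using False by (simp add: a_def)
    obtain d1 d2 where d: "0 \<le> d1" "d1 \<le> 1" "0 \<le> d2" "d2 \<le> 1"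
      and support: "\<And>x y. 0 \<le> x \<Longrightarrow> 0 \<le> y \<Longrightarrow> d1 * x + d2 * y \<le> N (x, y)"
      and "d1 * a + d2 * b = N (a, b)"
      using absolute_norm_support_weights[OF N, of a b] \<open>0 < a\<close> \<open>0 \<le> b\<close> by auto
    define u where "u = (1 / a) *\<^sub>R y1"
    have "norm u = 1" and "y1 = a *\<^sub>R u"
      using \<open>0 < a\<close> by (simp_all add: u_def a_def)
    define \<phi> where "\<phi> x = busemann y2 (g2 x) - busemann y2 (g2 p0)" for x
    have \<phi>_lip: "\<bar>\<phi> x - \<phi> x'\<bar> \<le> norm (g2 x - g2 x')" for x x'
      using busemann_lipschitz by (simp add: \<phi>_def)
    have "\<phi> p0 = 0"
      by (simp add: \<phi>_def)
    have "slope \<phi> x x' = slope (\<lambda>x. busemann y2 (g2 x)) x x'" for x x'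
      by (simp add: slope_def \<phi>_def)
    then have "(\<lambda>n. slope \<phi> (p n) (q n)) \<longlonglongrightarrow> b"
      using tendsto_slope_busemann[OF pq lim2] by (simp add: b_def)
    moreover have "(\<lambda>n. slope g1 (p n) (q n)) \<longlonglongrightarrow> a *\<^sub>R u"
      using lim1 \<open>y1 = a *\<^sub>R u\<close> by simp
    moreover have "d1 * a + d2 * b = K"
      using \<open>d1 * a + d2 * b = N (a, b)\<close> attained by (simp add: a_def b_def)
    ultimately have "(\<lambda>x. d1 *\<^sub>R g1 x + (d2 * \<phi> x) *\<^sub>R u) \<in> NA p0"
      using \<open>0 < a\<close> \<open>0 \<le> b\<close> \<open>norm u = 1\<close>
      by (intro combination_in_NA[OF d(1,3) support K \<phi>_lip \<open>g1 p0 = 0\<close> \<open>\<phi> p0 = 0\<close> pq]) simp_all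
    moreover have "(1 - d1) * K + d2 * D \<le> 3 * D"
      using absolute_norm_support_defect[OF N _ \<open>0 \<le> b\<close> d \<open>d1 * a + d2 * b = N (a, b)\<close>]
        mult_left_le_one_le[of D d2] d \<open>0 < a\<close> \<open>0 \<le> b\<close> \<open>b \<le> D\<close> attained
      by (simp add: a_def b_def)
    then have "norm ((g1 x - (d1 *\<^sub>R g1 x + (d2 * \<phi> x) *\<^sub>R u))
        - (g1 x' - (d1 *\<^sub>R g1 x' + (d2 * \<phi> x') *\<^sub>R u))) \<le> 3 * D * dist x x'" for x x'
      using combination_defect_le[OF d(1,2,3) \<open>norm u = 1\<close> g1 order_trans[OF \<phi>_lip D], of x x']
        mult_right_mono[OF _ zero_le_dist[of x x']] by (meson order_trans)
    ultimately show ?thesis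
      by (rule that)
  qed
qed

lemma absolute_sum_decomp_components:
  assumes "absolute_sum_decomp T N"
  shows "bounded_linear (\<lambda>v. fst (T v))" and "bounded_linear (\<lambda>v. snd (T v))"
    and "norm (fst (T v)) \<le> norm v" and "norm (snd (T v)) \<le> norm v"
proof -
  have N: "absolute_norm N" and "linear T"
    and normT: "\<And>v. norm v = N (norm (fst (T v)), norm (snd (T v)))"
    using assms unfolding absolute_sum_decomp_def by blast+
  show le: "norm (fst (T v)) \<le> norm v" "norm (snd (T v)) \<le> norm v" for v
    using absolute_norm_ge_abs[OF N, where x = "norm (fst (T v))" and y = "norm (snd (T v))"] normT[of v]
    by simp_all
  show "bounded_linear (\<lambda>v. fst (T v))" "bounded_linear (\<lambda>v. snd (T v))"
    using le linear_add[OF \<open>linear T\<close>] linear_scale[OF \<open>linear T\<close>]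
    by (auto intro!: bounded_linear_intro[where K = 1])
qed

lemma absolute_sum_decomp_embedding:
  assumes "absolute_sum_decomp T N" and "f \<in> Lip0 p0"
  shows "(\<lambda>x. inv T (f x, 0)) \<in> Lip0 p0" and "T (inv T (f x, 0)) = (f x, 0)"
proof -
  have N: "absolute_norm N" and "linear T" and "bij T"
    and normT: "\<And>v. norm v = N (norm (fst (T v)), norm (snd (T v)))"
    using assms unfolding absolute_sum_decomp_def by blast+
  have T_inv: "T (inv T z) = z" for z
    using \<open>bij T\<close> by (simp add: bij_is_surj surj_f_inv_f)
  then show "T (inv T (f x, 0)) = (f x, 0)" .
  have "linear (inv T)"
    using bij_module_hom_imp_inv_module_hom[of scaleR scaleR T] \<open>linear T\<close> \<open>bij T\<close>
    by (simp add: linear_def linear_iff_module_hom)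
  have isometry: "dist (inv T (v, 0)) (inv T (v', 0)) = dist v v'" for v v'
    using normT[of "inv T (v - v', 0)"] T_inv absolute_norm_axis(1)[OF N]
    by (simp add: dist_norm linear_diff[OF \<open>linear (inv T)\<close>, symmetric])
  obtain C where "C-lipschitz_on UNIV f" and "f p0 = 0"
    using assms(2) by (auto simp: Lip0_def)
  then have "C-lipschitz_on UNIV (\<lambda>x. inv T (f x, 0))"
    by (auto simp: lipschitz_on_def isometry)
  moreover have "inv T (f p0, 0) = 0"
    using \<open>f p0 = 0\<close> linear_0[OF \<open>linear (inv T)\<close>] by (simp add: zero_prod_def)
  ultimately show "(\<lambda>x. inv T (f x, 0)) \<in> Lip0 p0"
    by (auto simp: Lip0_def)
qed

lemma NA_near_fst_of_NA:
  fixes G :: "'m::metric_space \<Rightarrow> 'y::real_normed_vector"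
    and T :: "'y \<Rightarrow> 'y1::real_normed_vector \<times> 'y2::real_normed_vector"
  assumes T: "absolute_sum_decomp T N" and "G \<in> NA p0"
  obtains h where "h \<in> NA p0"
    and "lipnorm ((\<lambda>x. fst (T (G x))) - h) \<le> 3 * lipnorm (\<lambda>x. snd (T (G x)))"
proof -
  have N: "absolute_norm N" and normT: "\<And>v. norm v = N (norm (fst (T v)), norm (snd (T v)))"
    using T unfolding absolute_sum_decomp_def by blast+
  note bl = absolute_sum_decomp_components(1,2)[OF T]
  note lin = bl[THEN bounded_linear.linear]
  obtain p q y where "G \<in> Lip0 p0" and pq: "\<And>n. p n \<noteq> q n"
    and lim: "(\<lambda>n. slope G (p n) (q n)) \<longlonglongrightarrow> y" and "norm y = lipnorm G"
    using \<open>G \<in> NA p0\<close> unfolding NA_def attains_norm_toward_iff_slope by blast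
  define g1 g2 where "g1 = (\<lambda>x. fst (T (G x)))" and "g2 = (\<lambda>x. snd (T (G x)))"
  have "g1 \<in> Lip0 p0"
    unfolding g1_def
    by (rule Lip0_compose_contraction(1)[OF \<open>G \<in> Lip0 p0\<close> lin(1) absolute_sum_decomp_components(3)[OF T]])
  have "g2 \<in> Lip0 p0"
    unfolding g2_def
    by (rule Lip0_compose_contraction(1)[OF \<open>G \<in> Lip0 p0\<close> lin(2) absolute_sum_decomp_components(4)[OF T]])
  have "g1 p0 = 0"
    using \<open>g1 \<in> Lip0 p0\<close> by (simp add: Lip0_def)
  have K: "N (norm (g1 x - g1 x'), norm (g2 x - g2 x')) \<le> lipnorm G * dist x x'" for x x'
    using normT[of "G x - G x'"] norm_diff_le_lipnorm[OF \<open>G \<in> Lip0 p0\<close>, of x x']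
    by (simp add: g1_def g2_def linear_diff[OF lin(1)] linear_diff[OF lin(2)])
  have lim1: "(\<lambda>n. slope g1 (p n) (q n)) \<longlonglongrightarrow> fst (T y)"
    unfolding g1_def slope_linear[OF lin(1)] by (rule bounded_linear.tendsto[OF bl(1) lim])
  have lim2: "(\<lambda>n. slope g2 (p n) (q n)) \<longlonglongrightarrow> snd (T y)"
    unfolding g2_def slope_linear[OF lin(2)] by (rule bounded_linear.tendsto[OF bl(2) lim])
  have "N (norm (fst (T y)), norm (snd (T y))) = lipnorm G"
    using normT[of y] \<open>norm y = lipnorm G\<close> by simp
  then obtain h where "h \<in> NA p0"
    and close: "\<And>x x'. norm ((g1 x - h x) - (g1 x' - h x')) \<le> 3 * lipnorm g2 * dist x x'"
    using NA_near_norm_attaining_pair[OF N \<open>g1 p0 = 0\<close> K norm_diff_le_lipnorm[OF \<open>g2 \<in> Lip0 p0\<close>]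
        pq lim1 lim2] by blast
  have "lipnorm (g1 - h) \<le> 3 * lipnorm g2"
    using lipnorm_nonneg[OF \<open>g2 \<in> Lip0 p0\<close>] close by (intro lipnorm_le) simp_all
  then show ?thesis
    using that[OF \<open>h \<in> NA p0\<close>] unfolding g1_def g2_def by blast
qed

lemma NA_near_fst_component:
  fixes F G :: "'m::metric_space \<Rightarrow> 'y::real_normed_vector"
    and T :: "'y \<Rightarrow> 'y1::real_normed_vector \<times> 'y2::real_normed_vector"
  assumes T: "absolute_sum_decomp T N" and "F \<in> Lip0 p0" and "\<And>x. snd (T (F x)) = 0"
    and "G \<in> NA p0"
  obtains h where "h \<in> NA p0" and "lipnorm ((\<lambda>x. fst (T (F x))) - h) \<le> 4 * lipnorm (F - G)"
proof -
  note lin = absolute_sum_decomp_components(1,2)[OF T, THEN bounded_linear.linear]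
  note contraction = absolute_sum_decomp_components(3,4)[OF T]
  have "G \<in> Lip0 p0"
    using \<open>G \<in> NA p0\<close> by (simp add: NA_def)
  then have "F - G \<in> Lip0 p0"
    using \<open>F \<in> Lip0 p0\<close> by (rule Lip0_diff[rotated])
  define f g1 where "f = (\<lambda>x. fst (T (F x)))" and "g1 = (\<lambda>x. fst (T (G x)))"
  obtain h where "h \<in> NA p0" and "lipnorm (g1 - h) \<le> 3 * lipnorm (\<lambda>x. snd (T (G x)))"
    using NA_near_fst_of_NA[OF T \<open>G \<in> NA p0\<close>] unfolding g1_def by blast
  have "f - g1 = (\<lambda>x. fst (T ((F - G) x)))" and "(\<lambda>x. snd (T (G x))) = (\<lambda>x. - snd (T ((F - G) x)))"
    using \<open>\<And>x. snd (T (F x)) = 0\<close>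
    by (simp_all add: fun_eq_iff f_def g1_def linear_diff[OF lin(1)] linear_diff[OF lin(2)])
  moreover have "lipnorm (\<lambda>x. fst (T ((F - G) x))) \<le> lipnorm (F - G)"
    by (rule Lip0_compose_contraction(2)[OF \<open>F - G \<in> Lip0 p0\<close> lin(1) contraction(1)])
  moreover have "lipnorm (\<lambda>x. - snd (T ((F - G) x))) \<le> lipnorm (F - G)"
    using contraction(2)
    by (intro Lip0_compose_contraction(2)[OF \<open>F - G \<in> Lip0 p0\<close> linear_compose_neg[OF lin(2)]]) simp
  ultimately have "lipnorm (f - g1) \<le> lipnorm (F - G)" and "lipnorm (\<lambda>x. snd (T (G x))) \<le> lipnorm (F - G)"
    by simp_all
  moreover have "lipnorm (f - h) \<le> lipnorm (f - g1) + lipnorm (g1 - h)"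
  proof (rule lipnorm_diff_triangle)
    show "f \<in> Lip0 p0"
      unfolding f_def by (rule Lip0_compose_contraction(1)[OF \<open>F \<in> Lip0 p0\<close> lin(1) contraction(1)])
    show "g1 \<in> Lip0 p0"
      unfolding g1_def by (rule Lip0_compose_contraction(1)[OF \<open>G \<in> Lip0 p0\<close> lin(1) contraction(1)])
    show "h \<in> Lip0 p0"
      using \<open>h \<in> NA p0\<close> by (simp add: NA_def)
  qed
  ultimately have "lipnorm (f - h) \<le> 4 * lipnorm (F - G)"
    using \<open>lipnorm (g1 - h) \<le> 3 * lipnorm (\<lambda>x. snd (T (G x)))\<close> by linarith
  then show ?thesis
    using that[OF \<open>h \<in> NA p0\<close>] unfolding f_def by blast
qed

theorem proposition3p4:
  fixes p0 :: "'m::complete_space"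
    and T :: "'y::banach \<Rightarrow> 'y1::banach \<times> 'y2::banach"
    and N :: "real \<times> real \<Rightarrow> real"
  assumes "absolute_sum_decomp T N"
    and "dense_in_Lip0 p0 (NA p0 :: ('m \<Rightarrow> 'y) set)"
  shows "dense_in_Lip0 p0 (NA p0 :: ('m \<Rightarrow> 'y1) set)"
proof (unfold dense_in_Lip0_def, intro ballI allI impI)
  fix f :: "'m \<Rightarrow> 'y1" and e :: real
  assume "f \<in> Lip0 p0" and "0 < e"
  define F where "F x = inv T (f x, 0)" for x
  have "F \<in> Lip0 p0" and TF: "\<And>x. T (F x) = (f x, 0)"
    unfolding F_def using absolute_sum_decomp_embedding[OF assms(1) \<open>f \<in> Lip0 p0\<close>] by auto
  have "0 < e / 4"
    using \<open>0 < e\<close> by simp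
  then obtain G where "G \<in> NA p0" and "lipnorm (F - G) < e / 4"
    using assms(2) \<open>F \<in> Lip0 p0\<close> unfolding dense_in_Lip0_def by blast
  have "\<And>x. snd (T (F x)) = 0" and "(\<lambda>x. fst (T (F x))) = f"
    using TF by simp_all
  then obtain h where "h \<in> NA p0" and "lipnorm (f - h) \<le> 4 * lipnorm (F - G)"
    using NA_near_fst_component[OF assms(1) \<open>F \<in> Lip0 p0\<close> _ \<open>G \<in> NA p0\<close>] by metis
  then show "\<exists>h\<in>NA p0. lipnorm (f - h) < e"
    using \<open>lipnorm (F - G) < e / 4\<close> by force
qed

end
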